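(* Let $\mathfrak{C}$ be a class of languages closed under inverse gsm-mappings and intersection with regular languages (for example, the context-free or the deterministic context-free languages). Let $S$ be a semigroup, $I,\Lambda$ index sets and $P=(p_{\lambda i})$ a $\Lambda\times I$ matrix over $S$, and suppose the Rees matrix semigroup $\mathcal{M}[S;I,\Lambda;P]$ is finitely generated. Then $\mathcal{M}[S;I,\Lambda;P]$ is $U(\mathfrak{C})$ if and only if $S$ is $U(\mathfrak{C})$.
   Context: For a semigroup $S$ generated by a finite set $A$, $\mathrm{WP}(S,A)=\{u\#v^{\mathrm{rev}} : u,v\in A^+,\ u=_S v\}$, where $\#\notin A$ and $v^{\mathrm{rev}}$ is the reversal of $v$. For a class of languages $\mathfrak{C}$, a semigroup is $U(\mathfrak{C})$ if it is finitely generated and its word problem with respect to some (equivalently any) finite generating set lies in $\mathfrak{C}$. The Rees matrix semigroup $\mathcal{M}[S;I,\Lambda;P]$ is the set $I\times S\times\Lambda$ with multiplication $(i,x,\lambda)(j,y,\mu)=(i,xp_{\lambda j}y,\mu)$. *)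

theory Defs
  imports Main
begin

definition is_semigroup :: "'a set \<Rightarrow> ('a \<Rightarrow> 'a \<Rightarrow> 'a) \<Rightarrow> bool" where
  "is_semigroup S m \<longleftrightarrow>
     (\<forall>x\<in>S. \<forall>y\<in>S. m x y \<in> S) \<and>
     (\<forall>x\<in>S. \<forall>y\<in>S. \<forall>z\<in>S. m (m x y) z = m x (m y z))"

inductive_set gen_by :: "('a \<Rightarrow> 'a \<Rightarrow> 'a) \<Rightarrow> 'a set \<Rightarrow> 'a set"
  for m :: "'a \<Rightarrow> 'a \<Rightarrow> 'a" and A :: "'a set" where
  gen_base: "a \<in> A \<Longrightarrow> a \<in> gen_by m A"
| gen_mult: "x \<in> gen_by m A \<Longrightarrow> y \<in> gen_by m A \<Longrightarrow> m x y \<in> gen_by m A"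

definition finitely_generated :: "'a set \<Rightarrow> ('a \<Rightarrow> 'a \<Rightarrow> 'a) \<Rightarrow> bool" where
  "finitely_generated S m \<longleftrightarrow> (\<exists>A. finite A \<and> A \<subseteq> S \<and> gen_by m A = S)"

definition rees_mult :: "('a \<Rightarrow> 'a \<Rightarrow> 'a) \<Rightarrow> ('l \<Rightarrow> 'i \<Rightarrow> 'a)
    \<Rightarrow> 'i \<times> 'a \<times> 'l \<Rightarrow> 'i \<times> 'a \<times> 'l \<Rightarrow> 'i \<times> 'a \<times> 'l" where
  "rees_mult m P = (\<lambda>(i, x, l) (j, y, mu). (i, m (m x (P l j)) y, mu))"

definition rees_carrier :: "'a set \<Rightarrow> 'i set \<Rightarrow> 'l set \<Rightarrow> ('i \<times> 'a \<times> 'l) set" where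
  "rees_carrier S I L = I \<times> S \<times> L"

text \<open>Symbols are natural numbers; a finite alphabet is a finite set of naturals.
  A finite generating set A is encoded by a finite alphabet Sg and an
  injective labelling f : Sg -> S with image A.\<close>

fun word_eval :: "('a \<Rightarrow> 'a \<Rightarrow> 'a) \<Rightarrow> (nat \<Rightarrow> 'a) \<Rightarrow> nat list \<Rightarrow> 'a" where
  "word_eval m f [] = undefined"
| "word_eval m f [a] = f a"
| "word_eval m f (a # b # w) = m (f a) (word_eval m f (b # w))"

definition word_problem :: "('a \<Rightarrow> 'a \<Rightarrow> 'a) \<Rightarrow> (nat \<Rightarrow> 'a) \<Rightarrow> nat set \<Rightarrow> nat \<Rightarrow> nat list set" where
  "word_problem m f Sg h =
     {u @ [h] @ rev v | u v. u \<noteq> [] \<and> v \<noteq> [] \<and> set u \<subseteq> Sg \<and> set v \<subseteq> Sg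
                          \<and> word_eval m f u = word_eval m f v}"

definition is_U :: "nat list set set \<Rightarrow> 'a set \<Rightarrow> ('a \<Rightarrow> 'a \<Rightarrow> 'a) \<Rightarrow> bool" where
  "is_U C S m \<longleftrightarrow>
     (\<exists>Sg f h. finite Sg \<and> h \<notin> Sg \<and> inj_on f Sg \<and> f ` Sg \<subseteq> S
        \<and> gen_by m (f ` Sg) = S \<and> word_problem m f Sg h \<in> C)"

inductive nfa_run :: "(nat \<times> nat \<times> nat) set \<Rightarrow> nat \<Rightarrow> nat list \<Rightarrow> nat \<Rightarrow> bool"
  for T where
  nfa_nil: "nfa_run T q [] q"
| nfa_step: "(q, a, q1) \<in> T \<Longrightarrow> nfa_run T q1 w q2 \<Longrightarrow> nfa_run T q (a # w) q2"

definition regular_lang :: "nat list set \<Rightarrow> bool" where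
  "regular_lang R \<longleftrightarrow> (\<exists>T q0 F. finite T \<and> R = {w. \<exists>q\<in>F. nfa_run T q0 w q})"

inductive gsm_run :: "(nat \<times> nat \<times> nat list \<times> nat) set \<Rightarrow> nat \<Rightarrow> nat list \<Rightarrow> nat list \<Rightarrow> nat \<Rightarrow> bool"
  for T where
  gsm_nil: "gsm_run T q [] [] q"
| gsm_step: "(q, a, out, q1) \<in> T \<Longrightarrow> gsm_run T q1 w out' q2 \<Longrightarrow> gsm_run T q (a # w) (out @ out') q2"

definition inv_gsm :: "(nat \<times> nat \<times> nat list \<times> nat) set \<Rightarrow> nat \<Rightarrow> nat set \<Rightarrow> nat list set \<Rightarrow> nat list set" where
  "inv_gsm T q0 F L = {w. \<exists>out q. gsm_run T q0 w out q \<and> q \<in> F \<and> out \<in> L}"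

definition closed_inv_gsm :: "nat list set set \<Rightarrow> bool" where
  "closed_inv_gsm C \<longleftrightarrow> (\<forall>L\<in>C. \<forall>T q0 F. finite T \<longrightarrow> inv_gsm T q0 F L \<in> C)"

definition closed_int_regular :: "nat list set set \<Rightarrow> bool" where
  "closed_int_regular C \<longleftrightarrow> (\<forall>L\<in>C. \<forall>R. regular_lang R \<longrightarrow> L \<inter> R \<in> C)"

end

theory Submission
  imports Defs "HOL-Library.Nat_Bijection"
begin

text \<open>
  Each word problem is an inverse gsm image of the other. An element \<open>(i, x, \<lambda>)\<close> of
  \<open>M = M[S; I, \<Lambda>; P]\<close> is determined by its two indices and its middle entry. Reading a word over
  generators of \<open>M\<close>, a sequential transducer remembering the first and the last letter can write a
  word over generators of \<open>S\<close> for the middle entry, inserting a word for the sandwich entry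
  \<open>p\<^sub>\<lambda>\<^sub>j\<close> between consecutive letters; the indices are compared by the final states of the gsm.
  Conversely, for fixed \<open>i\<^sub>0, \<lambda>\<^sub>0\<close> a word over generators of \<open>S\<close> with value \<open>x\<close> is
  translated into one over generators of \<open>M\<close> with value \<open>(i\<^sub>0, x, \<lambda>\<^sub>0)\<close>, and \<open>S\<close> is
  finitely generated by the middle entries of the generators of \<open>M\<close> and the sandwich entries
  between them. In \<open>u#v\<^sup>r\<^sup>e\<^sup>v\<close> the right-hand side is read backwards, which amounts to running
  the same constructions for the transposed Rees matrix semigroup over the opposite semigroup.
\<close>

lemma is_semigroup_closed: "is_semigroup S m \<Longrightarrow> x \<in> S \<Longrightarrow> y \<in> S \<Longrightarrow> m x y \<in> S"
  unfolding is_semigroup_def by blast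

lemma is_semigroup_assoc:
  "is_semigroup S m \<Longrightarrow> x \<in> S \<Longrightarrow> y \<in> S \<Longrightarrow> z \<in> S \<Longrightarrow> m (m x y) z = m x (m y z)"
  unfolding is_semigroup_def by blast

lemma word_eval_Cons: "w \<noteq> [] \<Longrightarrow> word_eval m f (a # w) = m (f a) (word_eval m f w)"
  by (cases w) auto

lemma word_eval_in:
  "is_semigroup S m \<Longrightarrow> w \<noteq> [] \<Longrightarrow> f ` set w \<subseteq> S \<Longrightarrow> word_eval m f w \<in> S"
  by (induction w rule: induct_list012) (auto simp: is_semigroup_closed)

lemma word_eval_append:
  assumes "is_semigroup S m" "u \<noteq> []" "v \<noteq> []" "f ` (set u \<union> set v) \<subseteq> S"
  shows "word_eval m f (u @ v) = m (word_eval m f u) (word_eval m f v)"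
  using assms(2,4)
proof (induction u rule: induct_list012)
  case (3 a b u)
  have "word_eval m f ((a # b # u) @ v) = m (f a) (m (word_eval m f (b # u)) (word_eval m f v))"
    using 3 by (simp add: word_eval_Cons)
  also have "\<dots> = m (m (f a) (word_eval m f (b # u))) (word_eval m f v)"
    using "3.prems" assms(1,3) by (intro is_semigroup_assoc[symmetric] word_eval_in) auto
  finally show ?case by (simp only: word_eval.simps)
qed (simp_all add: word_eval_Cons assms(3))

lemma word_eval_append_alphabet:
  "is_semigroup S m \<Longrightarrow> f ` Sg \<subseteq> S \<Longrightarrow> u \<noteq> [] \<Longrightarrow> v \<noteq> [] \<Longrightarrow> set u \<subseteq> Sg \<Longrightarrow> set v \<subseteq> Sg \<Longrightarrow>
     word_eval m f (u @ v) = m (word_eval m f u) (word_eval m f v)"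
  by (rule word_eval_append) auto

lemma gen_by_subset: "is_semigroup S m \<Longrightarrow> A \<subseteq> S \<Longrightarrow> gen_by m A \<subseteq> S"
proof
  fix x assume "x \<in> gen_by m A" "is_semigroup S m" "A \<subseteq> S"
  then show "x \<in> S" by induction (auto simp: is_semigroup_closed)
qed

lemma subset_gen_by: "A \<subseteq> gen_by m A"
  by (auto intro: gen_by.gen_base)

lemma finite_labelling:
  assumes "finite A"
  obtains Sg :: "nat set" and h :: nat and f where "finite Sg" "h \<notin> Sg" "inj_on f Sg" "f ` Sg = A"
proof -
  obtain e where "bij_betw e {0..<card A} A" using ex_bij_betw_nat_finite[OF assms] by blast
  then show thesis by (intro that[of "{0..<card A}" "card A" e]) (auto simp: bij_betw_def)
qed

definition words_represent :: "('a \<Rightarrow> 'a \<Rightarrow> 'a) \<Rightarrow> (nat \<Rightarrow> 'a) \<Rightarrow> nat set \<Rightarrow> 'a set \<Rightarrow> bool" where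
  "words_represent m f Sg S \<longleftrightarrow> (\<forall>x\<in>S. \<exists>w. w \<noteq> [] \<and> set w \<subseteq> Sg \<and> word_eval m f w = x)"

lemma words_represent_if_gen_by:
  assumes "is_semigroup S m" "f ` Sg \<subseteq> S" "gen_by m (f ` Sg) = S"
  shows "words_represent m f Sg S"
  unfolding words_represent_def
proof
  fix x assume "x \<in> S"
  then have "x \<in> gen_by m (f ` Sg)" using assms(3) by simp
  then show "\<exists>w. w \<noteq> [] \<and> set w \<subseteq> Sg \<and> word_eval m f w = x"
  proof induction
    case (gen_base a)
    then obtain s where "s \<in> Sg" "a = f s" by blast
    then show ?case by (intro exI[of _ "[s]"]) simp
  next
    case (gen_mult x y)
    then obtain u v where "u \<noteq> []" "set u \<subseteq> Sg" "word_eval m f u = x"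
      "v \<noteq> []" "set v \<subseteq> Sg" "word_eval m f v = y" by blast
    moreover have "word_eval m f (u @ v) = m (word_eval m f u) (word_eval m f v)"
      using calculation assms(1,2) by (intro word_eval_append) auto
    ultimately show ?case by (intro exI[of _ "u @ v"]) auto
  qed
qed

definition word_for :: "('a \<Rightarrow> 'a \<Rightarrow> 'a) \<Rightarrow> (nat \<Rightarrow> 'a) \<Rightarrow> nat set \<Rightarrow> 'a \<Rightarrow> nat list" where
  "word_for m f Sg x = (SOME w. w \<noteq> [] \<and> set w \<subseteq> Sg \<and> word_eval m f w = x)"

lemma word_for_spec:
  "words_represent m f Sg S \<Longrightarrow> x \<in> S \<Longrightarrow>
     word_for m f Sg x \<noteq> [] \<and> set (word_for m f Sg x) \<subseteq> Sg \<and> word_eval m f (word_for m f Sg x) = x"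
  unfolding words_represent_def word_for_def by (rule someI_ex) blast

lemma word_eval_antihom:
  assumes "is_semigroup S m" and antihom: "\<forall>x\<in>S. \<forall>y\<in>S. \<phi> (m x y) = m' (\<phi> y) (\<phi> x)"
    and "w \<noteq> []" "f ` set w \<subseteq> S"
  shows "word_eval m' (\<phi> \<circ> f) w = \<phi> (word_eval m f (rev w))"
  using assms(3,4)
proof (induction w rule: induct_list012)
  case (3 a b u)
  have "word_eval m f (rev (b # u) @ [a]) = m (word_eval m f (rev (b # u))) (f a)"
    using "3.prems" assms(1) by (subst word_eval_append) auto
  moreover have "word_eval m f (rev (b # u)) \<in> S"
    using "3.prems" assms(1) by (intro word_eval_in) auto
  ultimately show ?case using 3 antihom by (simp del: rev.simps) simp
qed simp_all

definition opposite :: "('a \<Rightarrow> 'a \<Rightarrow> 'a) \<Rightarrow> 'a \<Rightarrow> 'a \<Rightarrow> 'a" where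
  "opposite m x y = m y x"

lemma is_semigroup_opposite: "is_semigroup S m \<Longrightarrow> is_semigroup S (opposite m)"
  unfolding is_semigroup_def opposite_def by metis

lemma word_eval_opposite:
  "is_semigroup S m \<Longrightarrow> w \<noteq> [] \<Longrightarrow> f ` set w \<subseteq> S \<Longrightarrow>
     word_eval (opposite m) f w = word_eval m f (rev w)"
  using word_eval_antihom[of S m id "opposite m" w f] by (simp add: opposite_def)

lemma words_represent_antihom:
  assumes "is_semigroup S m" "\<forall>x\<in>S. \<forall>y\<in>S. \<phi> (m x y) = m' (\<phi> y) (\<phi> x)"
    and "f ` Sg \<subseteq> S" "words_represent m f Sg S"
  shows "words_represent m' (\<phi> \<circ> f) Sg (\<phi> ` S)"
  unfolding words_represent_def
proof
  fix z assume "z \<in> \<phi> ` S"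
  then obtain x w where "z = \<phi> x" "w \<noteq> []" "set w \<subseteq> Sg" "word_eval m f w = x"
    using assms(4) unfolding words_represent_def by blast
  moreover have "word_eval m' (\<phi> \<circ> f) (rev w) = \<phi> (word_eval m f w)"
    using calculation assms(1-3) by (subst word_eval_antihom) force+
  ultimately show "\<exists>w. w \<noteq> [] \<and> set w \<subseteq> Sg \<and> word_eval m' (\<phi> \<circ> f) w = z"
    by (intro exI[of _ "rev w"]) auto
qed

lemma words_represent_opposite:
  "is_semigroup S m \<Longrightarrow> f ` Sg \<subseteq> S \<Longrightarrow> words_represent m f Sg S \<Longrightarrow>
     words_represent (opposite m) f Sg S"
  using words_represent_antihom[of S m id "opposite m" f Sg] by (simp add: opposite_def)

lemma word_problem_eq:
  "word_problem m f Sg h =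
     {u @ [h] @ x | u x. u \<noteq> [] \<and> x \<noteq> [] \<and> set u \<subseteq> Sg \<and> set x \<subseteq> Sg
                       \<and> word_eval m f u = word_eval m f (rev x)}"
  unfolding word_problem_def by (metis (no_types, opaque_lifting) rev_is_Nil_conv rev_rev_ident set_rev)

lemma append_marker_mem_word_problem_iff:
  assumes "h \<notin> Sg" "u \<noteq> []" "set u \<subseteq> Sg" "set x \<subseteq> Sg"
  shows "u @ [h] @ x \<in> word_problem m f Sg h \<longleftrightarrow> x \<noteq> [] \<and> word_eval m f u = word_eval m f (rev x)"
proof -
  have "u @ [h] @ x = u' @ [h] @ x' \<longleftrightarrow> u = u' \<and> x = x'" for u' x'
    using assms(1,3,4) append_Cons_eq_iff[of h u x u' x'] by auto
  then show ?thesis using assms(2,3,4) unfolding word_problem_eq by auto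
qed

lemma rees_mult_eq:
  "rees_mult m P a b =
     (fst a, m (m (fst (snd a)) (P (snd (snd a)) (fst b))) (fst (snd b)), snd (snd b))"
  by (cases a; cases b) (simp add: rees_mult_def)

lemma rees_carrier_iff [simp]:
  "t \<in> rees_carrier S I L \<longleftrightarrow> fst t \<in> I \<and> fst (snd t) \<in> S \<and> snd (snd t) \<in> L"
  by (auto simp: rees_carrier_def mem_Times_iff)

lemma is_semigroup_rees:
  assumes "is_semigroup S m" "\<forall>l\<in>L. \<forall>i\<in>I. P l i \<in> S"
  shows "is_semigroup (rees_carrier S I L) (rees_mult m P)"
  using assms unfolding is_semigroup_def rees_carrier_def
  by (simp add: rees_mult_eq mem_Times_iff)

lemma word_eval_rees_fst:
  "w \<noteq> [] \<Longrightarrow> fst (word_eval (rees_mult m P) f w) = fst (f (hd w))"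
  by (induction w rule: induct_list012) (auto simp: rees_mult_eq)

lemma word_eval_rees_snd_snd:
  "w \<noteq> [] \<Longrightarrow> snd (snd (word_eval (rees_mult m P) f w)) = snd (snd (f (last w)))"
  by (induction w rule: induct_list012) (auto simp: rees_mult_eq)

lemma word_eval_rees_eq_iff:
  assumes "u \<noteq> []" "v \<noteq> []"
  shows "word_eval (rees_mult m P) f u = word_eval (rees_mult m P) f v \<longleftrightarrow>
    fst (f (hd u)) = fst (f (hd v)) \<and> snd (snd (f (last u))) = snd (snd (f (last v))) \<and>
    fst (snd (word_eval (rees_mult m P) f u)) = fst (snd (word_eval (rees_mult m P) f v))"
  using assms by (auto simp: prod_eq_iff word_eval_rees_fst word_eval_rees_snd_snd)

text \<open>The transpose \<open>M[S\<^sup>o\<^sup>p; \<Lambda>, I; P\<^sup>T]\<close> is anti-isomorphic to \<open>M[S; I, \<Lambda>; P]\<close> via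
  \<open>rees_flip\<close>. This is how the reversed right-hand sides \<open>v\<^sup>r\<^sup>e\<^sup>v\<close> of word-problem
  instances are handled: a transducer built for the transpose reads them in the right order.\<close>

definition rees_flip :: "'i \<times> 'a \<times> 'l \<Rightarrow> 'l \<times> 'a \<times> 'i" where
  "rees_flip = (\<lambda>(i, x, l). (l, x, i))"

lemma rees_flip_eq: "rees_flip t = (snd (snd t), fst (snd t), fst t)"
  by (simp add: rees_flip_def split_beta)

lemma rees_flip_image: "rees_flip ` rees_carrier S I L = rees_carrier S L I"
  unfolding rees_flip_def rees_carrier_def by force

lemma rees_flip_antihom:
  assumes "is_semigroup S m" "\<forall>l\<in>L. \<forall>i\<in>I. P l i \<in> S"
  shows "\<forall>a\<in>rees_carrier S I L. \<forall>b\<in>rees_carrier S I L.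
    rees_flip (rees_mult m P a b) = rees_mult (opposite m) (\<lambda>i l. P l i) (rees_flip b) (rees_flip a)"
  using assms unfolding rees_carrier_def
  by (auto simp: rees_flip_def rees_mult_def opposite_def is_semigroup_assoc is_semigroup_closed)

lemma word_eval_rees_flip:
  assumes "is_semigroup S m" "\<forall>l\<in>L. \<forall>i\<in>I. P l i \<in> S"
    and "w \<noteq> []" "f ` set w \<subseteq> rees_carrier S I L"
  shows "word_eval (rees_mult (opposite m) (\<lambda>i l. P l i)) (rees_flip \<circ> f) w =
    rees_flip (word_eval (rees_mult m P) f (rev w))"
  using word_eval_antihom[OF is_semigroup_rees[OF assms(1,2)] rees_flip_antihom[OF assms(1,2)]
      assms(3,4)] .

lemma words_represent_rees_flip:
  assumes "is_semigroup S m" "\<forall>l\<in>L. \<forall>i\<in>I. P l i \<in> S"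
    and "f ` Sg \<subseteq> rees_carrier S I L" "words_represent (rees_mult m P) f Sg (rees_carrier S I L)"
  shows "words_represent (rees_mult (opposite m) (\<lambda>i l. P l i)) (rees_flip \<circ> f) Sg (rees_carrier S L I)"
  using words_represent_antihom[OF is_semigroup_rees[OF assms(1,2)] rees_flip_antihom[OF assms(1,2)]
      assms(3,4)]
  by (simp add: rees_flip_image)

section \<open>Two sequential transducers combined into one gsm\<close>

record seq_transducer =
  step :: "nat \<Rightarrow> nat \<Rightarrow> nat"
  emit :: "nat \<Rightarrow> nat \<Rightarrow> nat list"
  emit_final :: "nat \<Rightarrow> nat list"

fun transduce :: "seq_transducer \<Rightarrow> nat \<Rightarrow> nat list \<Rightarrow> nat list" where
  "transduce T q [] = emit_final T q"
| "transduce T q (a # w) = emit T q a @ transduce T (step T q a) w"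

definition gsm_state :: "nat \<Rightarrow> nat \<Rightarrow> nat \<Rightarrow> nat" where
  "gsm_state phase q r = prod_encode (phase, prod_encode (q, r))"

lemma gsm_state_eq_iff [simp]:
  "gsm_state p q r = gsm_state p' q' r' \<longleftrightarrow> p = p' \<and> q = q' \<and> r = r'"
  by (simp add: gsm_state_def)

text \<open>On input \<open>u @ [h] @ x\<close> the gsm runs \<open>TL\<close> on \<open>u\<close> (phases 0 and 1, phase 0 forcing
  \<open>u \<noteq> []\<close>), writes the marker \<open>h'\<close>, and runs \<open>TR\<close> on \<open>x\<close> (phase 2), guessing the last
  letter of \<open>x\<close> to flush \<open>TR\<close> and enter the final phase 3. Both transducers start in state 0.\<close>

definition split_gsm :: "nat set \<Rightarrow> nat \<Rightarrow> nat \<Rightarrow> nat set \<Rightarrow> nat set \<Rightarrow> seq_transducer \<Rightarrow> seq_transducer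
    \<Rightarrow> (nat \<times> nat \<times> nat list \<times> nat) set" where
  "split_gsm Sig h h' QL QR TL TR =
     (\<lambda>a. (gsm_state 0 0 0, a, emit TL 0 a, gsm_state 1 (step TL 0 a) 0)) ` Sig
   \<union> (\<lambda>(q, a). (gsm_state 1 q 0, a, emit TL q a, gsm_state 1 (step TL q a) 0)) ` (QL \<times> Sig)
   \<union> (\<lambda>q. (gsm_state 1 q 0, h, emit_final TL q @ [h'], gsm_state 2 q 0)) ` QL
   \<union> (\<lambda>(q, r, a). (gsm_state 2 q r, a, emit TR r a, gsm_state 2 q (step TR r a))) ` (QL \<times> QR \<times> Sig)
   \<union> (\<lambda>(q, r, a). (gsm_state 2 q r, a, emit TR r a @ emit_final TR (step TR r a),
        gsm_state 3 q (step TR r a))) ` (QL \<times> QR \<times> Sig)"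

lemma split_gsm_memI:
  "a \<in> Sig \<Longrightarrow>
     (gsm_state 0 0 0, a, emit TL 0 a, gsm_state 1 (step TL 0 a) 0) \<in> split_gsm Sig h h' QL QR TL TR"
  "q \<in> QL \<Longrightarrow> a \<in> Sig \<Longrightarrow>
     (gsm_state 1 q 0, a, emit TL q a, gsm_state 1 (step TL q a) 0) \<in> split_gsm Sig h h' QL QR TL TR"
  "q \<in> QL \<Longrightarrow>
     (gsm_state 1 q 0, h, emit_final TL q @ [h'], gsm_state 2 q 0) \<in> split_gsm Sig h h' QL QR TL TR"
  "q \<in> QL \<Longrightarrow> r \<in> QR \<Longrightarrow> a \<in> Sig \<Longrightarrow>
     (gsm_state 2 q r, a, emit TR r a, gsm_state 2 q (step TR r a)) \<in> split_gsm Sig h h' QL QR TL TR"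
  "q \<in> QL \<Longrightarrow> r \<in> QR \<Longrightarrow> a \<in> Sig \<Longrightarrow>
     (gsm_state 2 q r, a, emit TR r a @ emit_final TR (step TR r a), gsm_state 3 q (step TR r a))
       \<in> split_gsm Sig h h' QL QR TL TR"
  unfolding split_gsm_def
  subgoal by blast
  subgoal by (intro UnI1 UnI2 image_eqI[where x="(q, a)"]) auto
  subgoal by blast
  subgoal by (intro UnI1 UnI2 image_eqI[where x="(q, r, a)"]) auto
  subgoal by (intro UnI2 image_eqI[where x="(q, r, a)"]) auto
  done

lemma finite_split_gsm:
  "finite Sig \<Longrightarrow> finite QL \<Longrightarrow> finite QR \<Longrightarrow> finite (split_gsm Sig h h' QL QR TL TR)"
  unfolding split_gsm_def by auto

context
  fixes Sig :: "nat set" and h h' :: nat and QL QR :: "nat set" and TL TR :: seq_transducer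
  assumes marker: "h \<notin> Sig" and start: "0 \<in> QL" "0 \<in> QR"
    and step_closed: "\<And>q a. q \<in> QL \<Longrightarrow> a \<in> Sig \<Longrightarrow> step TL q a \<in> QL"
      "\<And>q a. q \<in> QR \<Longrightarrow> a \<in> Sig \<Longrightarrow> step TR q a \<in> QR"
begin

lemma gsm_run_phase3:
  "gsm_run (split_gsm Sig h h' QL QR TL TR) s w out s' \<Longrightarrow> s = gsm_state 3 q r \<Longrightarrow>
   w = [] \<and> out = [] \<and> s' = s"
  by (induction rule: gsm_run.induct) (auto simp: split_gsm_def)

lemma gsm_run_phase2D:
  "gsm_run (split_gsm Sig h h' QL QR TL TR) s x out s' \<Longrightarrow> s = gsm_state 2 q r \<Longrightarrow> q \<in> QL \<Longrightarrow> r \<in> QR \<Longrightarrow>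
   s' = gsm_state 3 q' r' \<Longrightarrow>
   x \<noteq> [] \<and> set x \<subseteq> Sig \<and> out = transduce TR r x \<and> s' = gsm_state 3 q (foldl (step TR) r x)"
proof (induction arbitrary: r rule: gsm_run.induct)
  case (gsm_step s a out s1 w out' s2)
  from gsm_step.prems gsm_step.hyps(1) consider
      "s1 = gsm_state 2 q (step TR r a)" "out = emit TR r a" "a \<in> Sig"
    | "s1 = gsm_state 3 q (step TR r a)" "out = emit TR r a @ emit_final TR (step TR r a)" "a \<in> Sig"
    by (auto simp: split_gsm_def)
  then show ?case
  proof cases
    case 1
    then show ?thesis using gsm_step step_closed(2) by auto
  next
    case 2
    with gsm_run_phase3[OF gsm_step.hyps(2)] show ?thesis by auto
  qed
qed auto

lemma gsm_run_phase2I: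
  "x \<noteq> [] \<Longrightarrow> set x \<subseteq> Sig \<Longrightarrow> q \<in> QL \<Longrightarrow> r \<in> QR \<Longrightarrow>
   gsm_run (split_gsm Sig h h' QL QR TL TR) (gsm_state 2 q r) x (transduce TR r x)
     (gsm_state 3 q (foldl (step TR) r x))"
proof (induction x arbitrary: r)
  case (Cons a w)
  show ?case
  proof (cases "w = []")
    case True
    have "(gsm_state 2 q r, a, emit TR r a @ emit_final TR (step TR r a), gsm_state 3 q (step TR r a))
        \<in> split_gsm Sig h h' QL QR TL TR"
      using Cons.prems by (intro split_gsm_memI) auto
    from gsm_step[OF this gsm_nil] show ?thesis using True by simp
  next
    case False
    have "(gsm_state 2 q r, a, emit TR r a, gsm_state 2 q (step TR r a))
        \<in> split_gsm Sig h h' QL QR TL TR"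
      using Cons.prems by (intro split_gsm_memI) auto
    then show ?thesis using Cons False step_closed(2) by (auto intro: gsm_step)
  qed
qed simp

lemma gsm_run_phase1D:
  "gsm_run (split_gsm Sig h h' QL QR TL TR) s w out s' \<Longrightarrow> s = gsm_state 1 q 0 \<Longrightarrow> q \<in> QL \<Longrightarrow>
   s' = gsm_state 3 q' r' \<Longrightarrow>
   \<exists>u x. w = u @ [h] @ x \<and> set u \<subseteq> Sig \<and> x \<noteq> [] \<and> set x \<subseteq> Sig \<and>
     out = transduce TL q u @ [h'] @ transduce TR 0 x \<and>
     s' = gsm_state 3 (foldl (step TL) q u) (foldl (step TR) 0 x)"
proof (induction arbitrary: q rule: gsm_run.induct)
  case (gsm_step s a out s1 w out' s2)
  from gsm_step.prems gsm_step.hyps(1) consider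
      "s1 = gsm_state 1 (step TL q a) 0" "out = emit TL q a" "a \<in> Sig"
    | "s1 = gsm_state 2 q 0" "out = emit_final TL q @ [h']" "a = h"
    by (auto simp: split_gsm_def)
  then show ?case
  proof cases
    case 1
    with gsm_step.IH[of "step TL q a"] gsm_step.prems step_closed(1) obtain u x where
      "w = u @ [h] @ x" "set u \<subseteq> Sig" "x \<noteq> []" "set x \<subseteq> Sig"
      "out' = transduce TL (step TL q a) u @ [h'] @ transduce TR 0 x"
      "s2 = gsm_state 3 (foldl (step TL) (step TL q a) u) (foldl (step TR) 0 x)"
      by blast
    then show ?thesis using 1 by (intro exI[of _ "a # u"] exI[of _ x]) auto
  next
    case 2
    from gsm_run_phase2D[OF gsm_step.hyps(2)] 2 gsm_step.prems start show ?thesis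
      by (intro exI[of _ "[]"] exI[of _ w]) auto
  qed
qed auto

lemma gsm_run_phase1I:
  "set u \<subseteq> Sig \<Longrightarrow> x \<noteq> [] \<Longrightarrow> set x \<subseteq> Sig \<Longrightarrow> q \<in> QL \<Longrightarrow>
   gsm_run (split_gsm Sig h h' QL QR TL TR) (gsm_state 1 q 0) (u @ [h] @ x)
     (transduce TL q u @ [h'] @ transduce TR 0 x)
     (gsm_state 3 (foldl (step TL) q u) (foldl (step TR) 0 x))"
proof (induction u arbitrary: q)
  case Nil
  have "(gsm_state 1 q 0, h, emit_final TL q @ [h'], gsm_state 2 q 0) \<in> split_gsm Sig h h' QL QR TL TR"
    using Nil.prems by (intro split_gsm_memI) auto
  from gsm_step[OF this gsm_run_phase2I[OF Nil.prems(2,3,4) start(2)]] show ?case by simp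
next
  case (Cons a u)
  have "(gsm_state 1 q 0, a, emit TL q a, gsm_state 1 (step TL q a) 0) \<in> split_gsm Sig h h' QL QR TL TR"
    using Cons.prems by (intro split_gsm_memI) auto
  then show ?case using Cons step_closed(1) by (auto intro: gsm_step)
qed

lemma inv_gsm_split_gsm:
  "inv_gsm (split_gsm Sig h h' QL QR TL TR) (gsm_state 0 0 0) {gsm_state 3 q r | q r. Acc q r} Lg =
   {u @ [h] @ x | u x. u \<noteq> [] \<and> x \<noteq> [] \<and> set u \<subseteq> Sig \<and> set x \<subseteq> Sig \<and>
       Acc (foldl (step TL) 0 u) (foldl (step TR) 0 x) \<and>
       transduce TL 0 u @ [h'] @ transduce TR 0 x \<in> Lg}"
  (is "?A = ?B")
proof (intro set_eqI iffI)
  fix w assume "w \<in> ?A"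
  then obtain out s where run: "gsm_run (split_gsm Sig h h' QL QR TL TR) (gsm_state 0 0 0) w out s"
    and acc: "s \<in> {gsm_state 3 q r | q r. Acc q r}" and "out \<in> Lg"
    unfolding inv_gsm_def by blast
  from run show "w \<in> ?B"
  proof cases
    case (gsm_step a out1 s1 w' out')
    then have a: "s1 = gsm_state 1 (step TL 0 a) 0" "out1 = emit TL 0 a" "a \<in> Sig"
      by (auto simp: split_gsm_def)
    with gsm_run_phase1D[OF gsm_step(4)] acc start step_closed(1) obtain u x where
      "w' = u @ [h] @ x" "set u \<subseteq> Sig" "x \<noteq> []" "set x \<subseteq> Sig"
      "out' = transduce TL (step TL 0 a) u @ [h'] @ transduce TR 0 x"
      "s = gsm_state 3 (foldl (step TL) (step TL 0 a) u) (foldl (step TR) 0 x)"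
      by blast
    then show ?thesis using a acc gsm_step(1,2) \<open>out \<in> Lg\<close>
      by (intro CollectI exI[of _ "a # u"] exI[of _ x]) auto
  qed (use acc in simp)
next
  fix w assume "w \<in> ?B"
  then obtain a u x where w: "w = (a # u) @ [h] @ x" "x \<noteq> []" "set (a # u) \<subseteq> Sig" "set x \<subseteq> Sig"
    "Acc (foldl (step TL) 0 (a # u)) (foldl (step TR) 0 x)"
    "transduce TL 0 (a # u) @ [h'] @ transduce TR 0 x \<in> Lg"
    by (auto simp: neq_Nil_conv)
  have "(gsm_state 0 0 0, a, emit TL 0 a, gsm_state 1 (step TL 0 a) 0) \<in> split_gsm Sig h h' QL QR TL TR"
    using w(3) by (intro split_gsm_memI) auto
  moreover have "gsm_run (split_gsm Sig h h' QL QR TL TR) (gsm_state 1 (step TL 0 a) 0) (u @ [h] @ x)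
      (transduce TL (step TL 0 a) u @ [h'] @ transduce TR 0 x)
      (gsm_state 3 (foldl (step TL) (step TL 0 a) u) (foldl (step TR) 0 x))"
    using w(2-4) start step_closed(1) by (intro gsm_run_phase1I) auto
  ultimately have "gsm_run (split_gsm Sig h h' QL QR TL TR) (gsm_state 0 0 0) w
      (transduce TL 0 (a # u) @ [h'] @ transduce TR 0 x)
      (gsm_state 3 (foldl (step TL) 0 (a # u)) (foldl (step TR) 0 x))"
    using w(1) gsm_step by fastforce
  then show "w \<in> ?A"
    using w(5,6) unfolding inv_gsm_def by blast
qed

end

lemma word_problem_reduction:
  fixes TL TR :: seq_transducer
  assumes C: "closed_inv_gsm C" "word_problem m2 f2 Sg2 h2 \<in> C"
    and alphabets: "finite Sg1" "h1 \<notin> Sg1" "h2 \<notin> Sg2"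
    and states: "finite QL" "finite QR" "0 \<in> QL" "0 \<in> QR"
      "\<And>q a. q \<in> QL \<Longrightarrow> a \<in> Sg1 \<Longrightarrow> step TL q a \<in> QL"
      "\<And>q a. q \<in> QR \<Longrightarrow> a \<in> Sg1 \<Longrightarrow> step TR q a \<in> QR"
    and outputs: "\<And>u. u \<noteq> [] \<Longrightarrow> set u \<subseteq> Sg1 \<Longrightarrow>
        transduce TL 0 u \<noteq> [] \<and> set (transduce TL 0 u) \<subseteq> Sg2 \<and>
        transduce TR 0 u \<noteq> [] \<and> set (transduce TR 0 u) \<subseteq> Sg2"
    and reduction: "\<And>u x. u \<noteq> [] \<Longrightarrow> x \<noteq> [] \<Longrightarrow> set u \<subseteq> Sg1 \<Longrightarrow> set x \<subseteq> Sg1 \<Longrightarrow>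
        word_eval m1 f1 u = word_eval m1 f1 (rev x) \<longleftrightarrow>
        Acc (foldl (step TL) 0 u) (foldl (step TR) 0 x) \<and>
        word_eval m2 f2 (transduce TL 0 u) = word_eval m2 f2 (rev (transduce TR 0 x))"
  shows "word_problem m1 f1 Sg1 h1 \<in> C"
proof -
  have "(u \<noteq> [] \<and> x \<noteq> [] \<and> set u \<subseteq> Sg1 \<and> set x \<subseteq> Sg1 \<and>
         word_eval m1 f1 u = word_eval m1 f1 (rev x)) \<longleftrightarrow>
        (u \<noteq> [] \<and> x \<noteq> [] \<and> set u \<subseteq> Sg1 \<and> set x \<subseteq> Sg1 \<and>
         Acc (foldl (step TL) 0 u) (foldl (step TR) 0 x) \<and>
         transduce TL 0 u @ [h2] @ transduce TR 0 x \<in> word_problem m2 f2 Sg2 h2)" for u x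
    using outputs[of u] outputs[of x] reduction[of u x]
      append_marker_mem_word_problem_iff[OF alphabets(3), of "transduce TL 0 u" "transduce TR 0 x" m2 f2]
    by auto
  then have "word_problem m1 f1 Sg1 h1 =
      inv_gsm (split_gsm Sg1 h1 h2 QL QR TL TR) (gsm_state 0 0 0) {gsm_state 3 q r | q r. Acc q r}
        (word_problem m2 f2 Sg2 h2)"
    unfolding word_problem_eq[of m1 f1 Sg1 h1]
    by (simp only: inv_gsm_split_gsm[OF alphabets(2) states(3-6), where Acc = Acc])
  also have "\<dots> \<in> C"
    using C finite_split_gsm[OF alphabets(1) states(1,2)] unfolding closed_inv_gsm_def by blast
  finally show ?thesis .
qed

section \<open>Reducing the word problem of the Rees matrix semigroup to that of \<open>S\<close>\<close>

text \<open>Translation of words over generators of the Rees matrix semigroup into words over generators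
  of \<open>S\<close> representing the middle entry of their value. A state \<open>Suc (prod_encode (a, g))\<close>
  remembers the first letter \<open>a\<close> and the last letter \<open>g\<close> read so far; the latter determines the
  sandwich entry to be inserted before the next letter.\<close>

definition first_last_step :: "nat \<Rightarrow> nat \<Rightarrow> nat" where
  "first_last_step q a = Suc (prod_encode (case q of 0 \<Rightarrow> a | Suc k \<Rightarrow> fst (prod_decode k), a))"

lemma foldl_first_last_step:
  "foldl first_last_step (Suc (prod_encode (a, g))) w = Suc (prod_encode (a, last (g # w)))"
  by (induction w arbitrary: g) (auto simp: first_last_step_def)

lemma foldl_first_last_step_0:
  "w \<noteq> [] \<Longrightarrow> foldl first_last_step 0 w = Suc (prod_encode (hd w, last w))"
  by (cases w) (auto simp: foldl_first_last_step first_last_step_def)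

lemma first_last_step_closed:
  "q \<in> insert 0 ((\<lambda>p. Suc (prod_encode p)) ` (A \<times> A)) \<Longrightarrow> a \<in> A \<Longrightarrow>
     first_last_step q a \<in> insert 0 ((\<lambda>p. Suc (prod_encode p)) ` (A \<times> A))"
  unfolding first_last_step_def by (auto split: nat.split)

definition middle_transducer ::
    "('a \<Rightarrow> 'a \<Rightarrow> 'a) \<Rightarrow> ('l \<Rightarrow> 'i \<Rightarrow> 'a) \<Rightarrow> (nat \<Rightarrow> 'a) \<Rightarrow> nat set \<Rightarrow> (nat \<Rightarrow> 'i \<times> 'a \<times> 'l)
      \<Rightarrow> seq_transducer" where
  "middle_transducer m P f Sg fM =
     \<lparr>step = first_last_step,
      emit = \<lambda>q a. (case q of 0 \<Rightarrow> []
                     | Suc k \<Rightarrow> word_for m f Sg (P (snd (snd (fM (snd (prod_decode k))))) (fst (fM a))))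
                   @ word_for m f Sg (fst (snd (fM a))),
      emit_final = \<lambda>q. []\<rparr>"

context
  fixes S :: "'a set" and m and I :: "'i set" and L :: "'l set" and P
    and Sg :: "nat set" and f and SgM :: "nat set" and fM :: "nat \<Rightarrow> 'i \<times> 'a \<times> 'l"
  assumes semigroup: "is_semigroup S m" and P: "\<forall>l\<in>L. \<forall>i\<in>I. P l i \<in> S"
    and f: "f ` Sg \<subseteq> S" "words_represent m f Sg S"
    and fM: "fM ` SgM \<subseteq> rees_carrier S I L"
begin

lemma fM_components: "a \<in> SgM \<Longrightarrow> fst (fM a) \<in> I \<and> fst (snd (fM a)) \<in> S \<and> snd (snd (fM a)) \<in> L"
  using fM by auto

lemma word_eval_rees_middle:
  "w \<noteq> [] \<Longrightarrow> set w \<subseteq> SgM \<Longrightarrow> fst (snd (word_eval (rees_mult m P) fM w)) \<in> S"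
  using word_eval_in[OF is_semigroup_rees[OF semigroup P], of w fM] fM
  by auto

lemma transduce_middle_transducer_from:
  assumes "g \<in> SgM" "set w \<subseteq> SgM"
  shows "set (transduce (middle_transducer m P f Sg fM) (Suc (prod_encode (a, g))) w) \<subseteq> Sg \<and>
    word_eval m f (word_for m f Sg (fst (snd (fM g))) @
      transduce (middle_transducer m P f Sg fM) (Suc (prod_encode (a, g))) w) =
    fst (snd (word_eval (rees_mult m P) fM (g # w)))"
  using assms
proof (induction w arbitrary: g)
  case Nil
  then show ?case using word_for_spec[OF f(2)] fM_components by (simp add: middle_transducer_def)
next
  case (Cons b w)
  let ?T = "middle_transducer m P f Sg fM"
  let ?p = "P (snd (snd (fM g))) (fst (fM b))"
  let ?R = "word_for m f Sg (fst (snd (fM b))) @ transduce ?T (Suc (prod_encode (a, b))) w"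
  have b: "b \<in> SgM" "set w \<subseteq> SgM" using Cons.prems by auto
  have p: "?p \<in> S" and g: "fst (snd (fM g)) \<in> S"
    using P fM_components Cons.prems(1) b(1) by blast+
  have IH: "set ?R \<subseteq> Sg" "?R \<noteq> []" "word_eval m f ?R = fst (snd (word_eval (rees_mult m P) fM (b # w)))"
    using Cons.IH[OF b] word_for_spec[OF f(2)] fM_components[OF b(1)] by auto
  have "transduce ?T (Suc (prod_encode (a, g))) (b # w) = word_for m f Sg ?p @ ?R"
    by (simp add: middle_transducer_def first_last_step_def)
  moreover have "word_eval m f (word_for m f Sg (fst (snd (fM g))) @ word_for m f Sg ?p @ ?R) =
      m (fst (snd (fM g))) (m ?p (fst (snd (word_eval (rees_mult m P) fM (b # w)))))"
    using IH word_for_spec[OF f(2) p] word_for_spec[OF f(2) g]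
    by (simp add: word_eval_append_alphabet[OF semigroup f(1)])
  moreover have "\<dots> = fst (snd (word_eval (rees_mult m P) fM (g # b # w)))"
    using is_semigroup_assoc[OF semigroup g p word_eval_rees_middle[of "b # w"]] b
    by (simp add: rees_mult_eq word_eval_rees_fst)
  ultimately show ?case using IH word_for_spec[OF f(2) p] by simp
qed

lemma transduce_middle_transducer:
  assumes "u \<noteq> []" "set u \<subseteq> SgM"
  shows "transduce (middle_transducer m P f Sg fM) 0 u \<noteq> [] \<and>
    set (transduce (middle_transducer m P f Sg fM) 0 u) \<subseteq> Sg \<and>
    word_eval m f (transduce (middle_transducer m P f Sg fM) 0 u) =
      fst (snd (word_eval (rees_mult m P) fM u))"
proof -
  obtain a w where u: "u = a # w" using assms(1) by (cases u) auto
  then have "transduce (middle_transducer m P f Sg fM) 0 u =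
      word_for m f Sg (fst (snd (fM a))) @
      transduce (middle_transducer m P f Sg fM) (Suc (prod_encode (a, a))) w"
    by (simp add: middle_transducer_def first_last_step_def)
  then show ?thesis
    using transduce_middle_transducer_from[of a w a] word_for_spec[OF f(2)] fM_components assms u by auto
qed

end

lemma transduce_middle_transducer_opposite:
  assumes semigroup: "is_semigroup S m" and P: "\<forall>l\<in>L. \<forall>i\<in>I. P l i \<in> S"
    and f: "f ` Sg \<subseteq> S" "words_represent m f Sg S" and fM: "fM ` SgM \<subseteq> rees_carrier S I L"
    and x: "x \<noteq> []" "set x \<subseteq> SgM"
  defines "T \<equiv> middle_transducer (opposite m) (\<lambda>i l. P l i) f Sg (rees_flip \<circ> fM)"
  shows "transduce T 0 x \<noteq> [] \<and> set (transduce T 0 x) \<subseteq> Sg \<and>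
    word_eval m f (rev (transduce T 0 x)) = fst (snd (word_eval (rees_mult m P) fM (rev x)))"
proof -
  have P': "\<forall>l\<in>I. \<forall>i\<in>L. P i l \<in> S" using P by blast
  have fM': "(rees_flip \<circ> fM) ` SgM \<subseteq> rees_carrier S L I"
    using image_mono[OF fM, of rees_flip] unfolding image_comp[symmetric] rees_flip_image .
  have r: "transduce T 0 x \<noteq> []" "set (transduce T 0 x) \<subseteq> Sg"
    "word_eval (opposite m) f (transduce T 0 x) =
      fst (snd (word_eval (rees_mult (opposite m) (\<lambda>i l. P l i)) (rees_flip \<circ> fM) x))"
    using transduce_middle_transducer[OF is_semigroup_opposite[OF semigroup] P' f(1)
        words_represent_opposite[OF semigroup f] fM' x]
    unfolding T_def by auto
  moreover have "word_eval (opposite m) f (transduce T 0 x) = word_eval m f (rev (transduce T 0 x))"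
    using r(1,2) f(1) by (intro word_eval_opposite[OF semigroup]) auto
  moreover have "word_eval (rees_mult (opposite m) (\<lambda>i l. P l i)) (rees_flip \<circ> fM) x =
      rees_flip (word_eval (rees_mult m P) fM (rev x))"
    using x fM by (intro word_eval_rees_flip[OF semigroup P]) auto
  ultimately show ?thesis by (simp add: rees_flip_eq)
qed

lemma is_U_rees_if_is_U:
  assumes C: "closed_inv_gsm C" and semigroup: "is_semigroup S m" and P: "\<forall>l\<in>L. \<forall>i\<in>I. P l i \<in> S"
    and fg: "finitely_generated (rees_carrier S I L) (rees_mult m P)" and "is_U C S m"
  shows "is_U C (rees_carrier S I L) (rees_mult m P)"
proof -
  obtain Sg f h where Sg: "finite Sg" "h \<notin> Sg" "f ` Sg \<subseteq> S" "gen_by m (f ` Sg) = S"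
    and WP: "word_problem m f Sg h \<in> C"
    using \<open>is_U C S m\<close> unfolding is_U_def by (elim exE conjE) simp
  have rep: "words_represent m f Sg S" using words_represent_if_gen_by[OF semigroup Sg(3,4)] .
  obtain A where A: "finite A" "A \<subseteq> rees_carrier S I L" "gen_by (rees_mult m P) A = rees_carrier S I L"
    using fg unfolding finitely_generated_def by blast
  obtain SgM :: "nat set" and hM fM where SgM: "finite SgM" "hM \<notin> SgM" "inj_on fM SgM" "fM ` SgM = A"
    by (rule finite_labelling[OF A(1)])
  have fM: "fM ` SgM \<subseteq> rees_carrier S I L" using SgM(4) A(2) by simp
  let ?TL = "middle_transducer m P f Sg fM"
  let ?TR = "middle_transducer (opposite m) (\<lambda>i l. P l i) f Sg (rees_flip \<circ> fM)"
  let ?Q = "insert 0 ((\<lambda>p. Suc (prod_encode p)) ` (SgM \<times> SgM))"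
  let ?Acc = "\<lambda>q q'. \<exists>a g b c. q = Suc (prod_encode (a, g)) \<and> q' = Suc (prod_encode (b, c)) \<and>
      fst (fM a) = fst (fM c) \<and> snd (snd (fM g)) = snd (snd (fM b))"
  note TL = transduce_middle_transducer[OF semigroup P Sg(3) rep fM]
  note TR = transduce_middle_transducer_opposite[OF semigroup P Sg(3) rep fM]
  have Q: "finite ?Q" "0 \<in> ?Q" using SgM(1) by auto
  have step: "\<And>q a. q \<in> ?Q \<Longrightarrow> a \<in> SgM \<Longrightarrow> step ?TL q a \<in> ?Q"
      "\<And>q a. q \<in> ?Q \<Longrightarrow> a \<in> SgM \<Longrightarrow> step ?TR q a \<in> ?Q"
    unfolding middle_transducer_def by (simp_all only: seq_transducer.simps first_last_step_closed)
  have "word_problem (rees_mult m P) fM SgM hM \<in> C"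
  proof (rule word_problem_reduction[OF C WP SgM(1,2) Sg(2) Q(1,1,2,2) step, where Acc = ?Acc])
    fix u x assume ux: "u \<noteq> []" "x \<noteq> []" "set u \<subseteq> SgM" "set x \<subseteq> SgM"
    have "foldl (step ?TL) 0 u = Suc (prod_encode (hd u, last u))"
      "foldl (step ?TR) 0 x = Suc (prod_encode (hd x, last x))"
      using ux(1,2) by (simp_all add: middle_transducer_def foldl_first_last_step_0)
    then show "word_eval (rees_mult m P) fM u = word_eval (rees_mult m P) fM (rev x) \<longleftrightarrow>
        ?Acc (foldl (step ?TL) 0 u) (foldl (step ?TR) 0 x) \<and>
        word_eval m f (transduce ?TL 0 u) = word_eval m f (rev (transduce ?TR 0 x))"
      using TL[OF ux(1,3)] TR[OF ux(2,4)] word_eval_rees_eq_iff[of u "rev x"] ux(1,2)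
      by (simp add: prod_encode_eq hd_rev last_rev)
  next
    fix u assume u: "u \<noteq> []" "set u \<subseteq> SgM"
    show "transduce ?TL 0 u \<noteq> [] \<and> set (transduce ?TL 0 u) \<subseteq> Sg \<and>
        transduce ?TR 0 u \<noteq> [] \<and> set (transduce ?TR 0 u) \<subseteq> Sg"
      using TL[OF u] TR[OF u] by simp
  qed
  then show ?thesis
    unfolding is_U_def using SgM A by (intro exI[of _ SgM] exI[of _ fM] exI[of _ hM]) simp
qed

section \<open>Reducing the word problem of \<open>S\<close> to that of the Rees matrix semigroup\<close>

definition absorbing_target ::
    "('a \<Rightarrow> 'a \<Rightarrow> 'a) \<Rightarrow> (nat \<Rightarrow> 'i \<times> 'a \<times> 'l) \<Rightarrow> (nat \<Rightarrow> 'a) \<Rightarrow> 'i \<Rightarrow> 'l \<Rightarrow> nat \<Rightarrow> nat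
      \<Rightarrow> 'i \<times> 'a \<times> 'l" where
  "absorbing_target m fM f i0 l0 q c =
     (case q of 0 \<Rightarrow> (i0, f c, l0) | Suc g \<Rightarrow> (fst (fM g), m (fst (snd (fM g))) (f c), l0))"

text \<open>Translation of a word over generators of \<open>S\<close> into a word over generators of the Rees matrix
  semigroup with value \<open>(i0, x, l0)\<close>, where \<open>x\<close> is the value of the input. The last letter \<open>g\<close>
  of each output block is held back (state \<open>Suc g\<close>), so that the next input letter can be absorbed
  into the middle entry of \<open>g\<close> without introducing a sandwich entry.\<close>

definition embedding_transducer ::
    "('a \<Rightarrow> 'a \<Rightarrow> 'a) \<Rightarrow> ('l \<Rightarrow> 'i \<Rightarrow> 'a) \<Rightarrow> nat set \<Rightarrow> (nat \<Rightarrow> 'i \<times> 'a \<times> 'l) \<Rightarrow> (nat \<Rightarrow> 'a)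
      \<Rightarrow> 'i \<Rightarrow> 'l \<Rightarrow> seq_transducer" where
  "embedding_transducer m P SgM fM f i0 l0 =
     \<lparr>step = \<lambda>q c. Suc (last (word_for (rees_mult m P) fM SgM (absorbing_target m fM f i0 l0 q c))),
      emit = \<lambda>q c. butlast (word_for (rees_mult m P) fM SgM (absorbing_target m fM f i0 l0 q c)),
      emit_final = \<lambda>q. case q of 0 \<Rightarrow> [] | Suc g \<Rightarrow> [g]\<rparr>"

context
  fixes S :: "'a set" and m and I :: "'i set" and L :: "'l set" and P
    and SgM :: "nat set" and fM :: "nat \<Rightarrow> 'i \<times> 'a \<times> 'l" and Sg :: "nat set" and f :: "nat \<Rightarrow> 'a"
    and i0 :: 'i and l0 :: 'l
  assumes semigroup: "is_semigroup S m" and P: "\<forall>l\<in>L. \<forall>i\<in>I. P l i \<in> S"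
    and fM: "fM ` SgM \<subseteq> rees_carrier S I L" "words_represent (rees_mult m P) fM SgM (rees_carrier S I L)"
    and f: "f ` Sg \<subseteq> S" and i0: "i0 \<in> I" and l0: "l0 \<in> L"
begin

lemma word_eval_rees_in: "w \<noteq> [] \<Longrightarrow> set w \<subseteq> SgM \<Longrightarrow> word_eval (rees_mult m P) fM w \<in> rees_carrier S I L"
  using word_eval_in[OF is_semigroup_rees[OF semigroup P], of w fM] fM(1) by auto

lemma word_eval_rees_append_absorbing:
  assumes g: "g \<in> SgM" and Os: "set Os \<subseteq> SgM" and W: "W \<noteq> []" "set W \<subseteq> SgM"
    and W_value: "word_eval (rees_mult m P) fM W = (fst (fM g), m (fst (snd (fM g))) y, l)" and y: "y \<in> S"
  shows "word_eval (rees_mult m P) fM (Os @ W) =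
    (fst (word_eval (rees_mult m P) fM (Os @ [g])),
     m (fst (snd (word_eval (rees_mult m P) fM (Os @ [g])))) y, l)"
proof (cases "Os = []")
  case False
  let ?O = "word_eval (rees_mult m P) fM Os"
  have O: "?O \<in> rees_carrier S I L" and "fM g \<in> rees_carrier S I L"
    using word_eval_rees_in[OF False Os] fM(1) g by auto
  then have entries: "fst (snd ?O) \<in> S" "P (snd (snd ?O)) (fst (fM g)) \<in> S" "fst (snd (fM g)) \<in> S"
    using P by auto
  note append = word_eval_append_alphabet[OF is_semigroup_rees[OF semigroup P] fM(1) False]
  have "word_eval (rees_mult m P) fM (Os @ W) = rees_mult m P ?O (word_eval (rees_mult m P) fM W)"
    "word_eval (rees_mult m P) fM (Os @ [g]) = rees_mult m P ?O (fM g)"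
    using append[of W] append[of "[g]"] W Os g by auto
  then show ?thesis
    using W_value
      is_semigroup_assoc[OF semigroup is_semigroup_closed[OF semigroup entries(1,2)] entries(3) y]
    by (simp add: rees_mult_eq)
qed (use W_value in simp)

lemma absorbing_target_in:
  assumes "q \<in> insert 0 (Suc ` SgM)" "c \<in> Sg"
  shows "absorbing_target m fM f i0 l0 q c \<in> rees_carrier S I L"
proof (cases q)
  case (Suc g)
  then have "fst (fM g) \<in> I" "fst (snd (fM g)) \<in> S" using assms(1) fM(1) by auto
  then show ?thesis using Suc l0 f assms(2) is_semigroup_closed[OF semigroup]
    by (auto simp: absorbing_target_def)
qed (use i0 l0 f assms(2) in \<open>auto simp: absorbing_target_def\<close>)

lemma embedding_transducer_step_closed:
  assumes "q \<in> insert 0 (Suc ` SgM)" "c \<in> Sg"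
  shows "step (embedding_transducer m P SgM fM f i0 l0) q c \<in> insert 0 (Suc ` SgM)"
proof -
  let ?W = "word_for (rees_mult m P) fM SgM (absorbing_target m fM f i0 l0 q c)"
  have "?W \<noteq> []" "set ?W \<subseteq> SgM" using word_for_spec[OF fM(2) absorbing_target_in[OF assms]] by auto
  then have "last ?W \<in> SgM" using last_in_set by blast
  then show ?thesis by (simp add: embedding_transducer_def)
qed

lemma transduce_embedding_transducer_Cons:
  assumes "q \<in> insert 0 (Suc ` SgM)" "c \<in> Sg" "set w \<subseteq> Sg"
  defines "t \<equiv> absorbing_target m fM f i0 l0 q c"
  shows "transduce (embedding_transducer m P SgM fM f i0 l0) q (c # w) \<noteq> [] \<and>
    set (transduce (embedding_transducer m P SgM fM f i0 l0) q (c # w)) \<subseteq> SgM \<and>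
    word_eval (rees_mult m P) fM (transduce (embedding_transducer m P SgM fM f i0 l0) q (c # w)) =
      (fst t, if w = [] then fst (snd t) else m (fst (snd t)) (word_eval m f w), l0)"
  using assms(1-3) unfolding t_def
proof (induction w arbitrary: q c)
  case Nil
  let ?W = "word_for (rees_mult m P) fM SgM (absorbing_target m fM f i0 l0 q c)"
  have "?W \<noteq> []" "set ?W \<subseteq> SgM" "word_eval (rees_mult m P) fM ?W = absorbing_target m fM f i0 l0 q c"
    using word_for_spec[OF fM(2) absorbing_target_in[OF Nil.prems(1,2)]] by auto
  then show ?case by (auto simp: embedding_transducer_def absorbing_target_def split: nat.split)
next
  case (Cons c' w)
  let ?T = "embedding_transducer m P SgM fM f i0 l0"
  let ?W = "word_for (rees_mult m P) fM SgM (absorbing_target m fM f i0 l0 q c)"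
  have W: "?W \<noteq> []" "set ?W \<subseteq> SgM" "word_eval (rees_mult m P) fM ?W = absorbing_target m fM f i0 l0 q c"
    using word_for_spec[OF fM(2) absorbing_target_in[OF Cons.prems(1,2)]] by auto
  define g where "g = last ?W"
  define R where "R = transduce ?T (Suc g) (c' # w)"
  have g: "g \<in> SgM" "butlast ?W @ [g] = ?W" using W unfolding g_def by auto
  have c': "c' \<in> Sg" "set w \<subseteq> Sg" using Cons.prems(3) by auto
  have entries: "fst (snd (fM g)) \<in> S" "f c' \<in> S"
    using fM(1) g(1) f c' by auto
  have IH: "R \<noteq> []" "set R \<subseteq> SgM"
    "word_eval (rees_mult m P) fM R = (fst (fM g),
       if w = [] then m (fst (snd (fM g))) (f c')
       else m (m (fst (snd (fM g))) (f c')) (word_eval m f w), l0)"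
    using Cons.IH[of "Suc g" c'] g(1) c' unfolding R_def by (auto simp: absorbing_target_def)
  have "word_eval (rees_mult m P) fM R = (fst (fM g), m (fst (snd (fM g))) (word_eval m f (c' # w)), l0)"
  proof (cases "w = []")
    case False
    then show ?thesis
      using IH(3) is_semigroup_assoc[OF semigroup entries word_eval_in[OF semigroup False]] c' f
      by (auto simp: word_eval_Cons)
  qed (use IH(3) in simp)
  moreover have "set (butlast ?W) \<subseteq> SgM" "word_eval m f (c' # w) \<in> S"
    using W(2) c' f by (auto dest: in_set_butlastD intro!: word_eval_in[OF semigroup]) blast+
  ultimately have "word_eval (rees_mult m P) fM (butlast ?W @ R) =
      (fst (word_eval (rees_mult m P) fM ?W),
       m (fst (snd (word_eval (rees_mult m P) fM ?W))) (word_eval m f (c' # w)), l0)"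
    using word_eval_rees_append_absorbing[OF g(1) _ IH(1,2)] g(2) by metis
  moreover have "transduce ?T q (c # c' # w) = butlast ?W @ R"
    unfolding R_def g_def by (simp add: embedding_transducer_def)
  ultimately show ?case using W IH(1,2) by (auto dest: in_set_butlastD)
qed

lemma transduce_embedding_transducer:
  assumes "u \<noteq> []" "set u \<subseteq> Sg"
  shows "transduce (embedding_transducer m P SgM fM f i0 l0) 0 u \<noteq> [] \<and>
    set (transduce (embedding_transducer m P SgM fM f i0 l0) 0 u) \<subseteq> SgM \<and>
    word_eval (rees_mult m P) fM (transduce (embedding_transducer m P SgM fM f i0 l0) 0 u) =
      (i0, word_eval m f u, l0)"
proof -
  obtain c w where "u = c # w" using assms(1) by (cases u) auto
  then show ?thesis using transduce_embedding_transducer_Cons[of 0 c w] assms(2)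
    by (auto simp: absorbing_target_def word_eval_Cons)
qed

end

lemma transduce_embedding_transducer_opposite:
  assumes semigroup: "is_semigroup S m" and P: "\<forall>l\<in>L. \<forall>i\<in>I. P l i \<in> S"
    and fM: "fM ` SgM \<subseteq> rees_carrier S I L" "words_represent (rees_mult m P) fM SgM (rees_carrier S I L)"
    and f: "f ` Sg \<subseteq> S" and i0: "i0 \<in> I" and l0: "l0 \<in> L" and x: "x \<noteq> []" "set x \<subseteq> Sg"
  defines "T \<equiv> embedding_transducer (opposite m) (\<lambda>i l. P l i) SgM (rees_flip \<circ> fM) f l0 i0"
  shows "transduce T 0 x \<noteq> [] \<and> set (transduce T 0 x) \<subseteq> SgM \<and>
    word_eval (rees_mult m P) fM (rev (transduce T 0 x)) = (i0, word_eval m f (rev x), l0)"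
proof -
  have P': "\<forall>l\<in>I. \<forall>i\<in>L. P i l \<in> S" using P by blast
  have fM': "(rees_flip \<circ> fM) ` SgM \<subseteq> rees_carrier S L I"
    using image_mono[OF fM(1), of rees_flip] unfolding image_comp[symmetric] rees_flip_image .
  have r: "transduce T 0 x \<noteq> []" "set (transduce T 0 x) \<subseteq> SgM"
    "word_eval (rees_mult (opposite m) (\<lambda>i l. P l i)) (rees_flip \<circ> fM) (transduce T 0 x) =
      (l0, word_eval (opposite m) f x, i0)"
    using transduce_embedding_transducer[OF is_semigroup_opposite[OF semigroup] P' fM'
        words_represent_rees_flip[OF semigroup P fM] f l0 i0 x]
    unfolding T_def by auto
  moreover have "word_eval (rees_mult (opposite m) (\<lambda>i l. P l i)) (rees_flip \<circ> fM) (transduce T 0 x) =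
      rees_flip (word_eval (rees_mult m P) fM (rev (transduce T 0 x)))"
    using r(1,2) fM(1) by (intro word_eval_rees_flip[OF semigroup P]) auto
  moreover have "word_eval (opposite m) f x = word_eval m f (rev x)"
    using x f by (intro word_eval_opposite[OF semigroup]) auto
  ultimately show ?thesis by (simp add: rees_flip_eq prod_eq_iff)
qed

lemma embedding_transducer_opposite_step_closed:
  assumes "is_semigroup S m" "\<forall>l\<in>L. \<forall>i\<in>I. P l i \<in> S"
    and "fM ` SgM \<subseteq> rees_carrier S I L" "words_represent (rees_mult m P) fM SgM (rees_carrier S I L)"
    and "f ` Sg \<subseteq> S" "i0 \<in> I" "l0 \<in> L" "q \<in> insert 0 (Suc ` SgM)" "c \<in> Sg"
  shows "step (embedding_transducer (opposite m) (\<lambda>i l. P l i) SgM (rees_flip \<circ> fM) f l0 i0) q c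
    \<in> insert 0 (Suc ` SgM)"
proof (rule embedding_transducer_step_closed[OF is_semigroup_opposite[OF assms(1)]])
  show "(rees_flip \<circ> fM) ` SgM \<subseteq> rees_carrier S L I"
    using image_mono[OF assms(3), of rees_flip] unfolding image_comp[symmetric] rees_flip_image .
qed (use assms words_represent_rees_flip[OF assms(1-4)] in auto)

definition rees_middle_generators :: "('l \<Rightarrow> 'i \<Rightarrow> 'a) \<Rightarrow> ('i \<times> 'a \<times> 'l) set \<Rightarrow> 'a set" where
  "rees_middle_generators P A = (fst \<circ> snd) ` A \<union> (\<lambda>(a, b). P (snd (snd a)) (fst b)) ` (A \<times> A)"

lemma finite_rees_middle_generators: "finite A \<Longrightarrow> finite (rees_middle_generators P A)"
  by (simp add: rees_middle_generators_def)

lemma rees_middle_in_gen_by: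
  assumes "z \<in> gen_by (rees_mult m P) A"
  shows "fst (snd z) \<in> gen_by m (rees_middle_generators P A) \<and>
    (\<exists>a\<in>A. fst z = fst a) \<and> (\<exists>b\<in>A. snd (snd z) = snd (snd b))"
  using assms
proof induction
  case (gen_base a)
  then have "fst (snd a) \<in> rees_middle_generators P A" by (simp add: rees_middle_generators_def)
  then show ?case using gen_base by (blast intro: gen_by.gen_base)
next
  case (gen_mult x y)
  then obtain a b where ab: "a \<in> A" "snd (snd x) = snd (snd a)" "b \<in> A" "fst y = fst b" by blast
  then have "P (snd (snd a)) (fst b) \<in> rees_middle_generators P A"
    unfolding rees_middle_generators_def by (intro UnI2 image_eqI[where x = "(a, b)"]) simp_all
  then have "P (snd (snd x)) (fst y) \<in> gen_by m (rees_middle_generators P A)"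
    using ab by (simp add: gen_by.gen_base)
  then show ?case using gen_mult.IH by (simp add: rees_mult_eq gen_by.gen_mult)
qed

lemma gen_by_rees_middle_generators:
  assumes "is_semigroup S m" "\<forall>l\<in>L. \<forall>i\<in>I. P l i \<in> S" "I \<noteq> {}" "L \<noteq> {}"
    and "A \<subseteq> rees_carrier S I L" "gen_by (rees_mult m P) A = rees_carrier S I L"
  shows "gen_by m (rees_middle_generators P A) = S"
proof
  have "\<forall>a\<in>A. fst a \<in> I \<and> fst (snd a) \<in> S \<and> snd (snd a) \<in> L" using assms(5) by auto
  then show "gen_by m (rees_middle_generators P A) \<subseteq> S"
    using assms(2) by (intro gen_by_subset[OF assms(1)]) (auto simp: rees_middle_generators_def)
next
  obtain i l where "i \<in> I" "l \<in> L" using assms(3,4) by (meson ex_in_conv)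
  show "S \<subseteq> gen_by m (rees_middle_generators P A)"
  proof
    fix x assume "x \<in> S"
    then have "(i, x, l) \<in> gen_by (rees_mult m P) A" using \<open>i \<in> I\<close> \<open>l \<in> L\<close> assms(6) by simp
    from rees_middle_in_gen_by[OF this] show "x \<in> gen_by m (rees_middle_generators P A)" by simp
  qed
qed

lemma is_U_if_is_U_rees:
  assumes C: "closed_inv_gsm C" and semigroup: "is_semigroup S m" and P: "\<forall>l\<in>L. \<forall>i\<in>I. P l i \<in> S"
    and "I \<noteq> {}" "L \<noteq> {}" and "is_U C (rees_carrier S I L) (rees_mult m P)"
  shows "is_U C S m"
proof -
  obtain SgM hM fM where SgM: "finite SgM" "hM \<notin> SgM" "fM ` SgM \<subseteq> rees_carrier S I L"
      "gen_by (rees_mult m P) (fM ` SgM) = rees_carrier S I L"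
    and WP: "word_problem (rees_mult m P) fM SgM hM \<in> C"
    using \<open>is_U C (rees_carrier S I L) (rees_mult m P)\<close> unfolding is_U_def by (elim exE conjE) simp
  have rep: "words_represent (rees_mult m P) fM SgM (rees_carrier S I L)"
    using words_represent_if_gen_by[OF is_semigroup_rees[OF semigroup P] SgM(3,4)] .
  obtain i0 l0 where i0: "i0 \<in> I" and l0: "l0 \<in> L" using assms(4,5) by (meson ex_in_conv)
  let ?Y = "rees_middle_generators P (fM ` SgM)"
  have Y: "finite ?Y" "gen_by m ?Y = S"
    using finite_rees_middle_generators[of "fM ` SgM" P] SgM(1) apply simp
    by (rule gen_by_rees_middle_generators[OF semigroup P assms(4,5) SgM(3,4)])
  obtain Sg :: "nat set" and h f where Sg: "finite Sg" "h \<notin> Sg" "inj_on f Sg" "f ` Sg = ?Y"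
    by (rule finite_labelling[OF Y(1)])
  have f: "f ` Sg \<subseteq> S" using Sg(4) subset_gen_by[of ?Y m] Y(2) by simp
  let ?TL = "embedding_transducer m P SgM fM f i0 l0"
  let ?TR = "embedding_transducer (opposite m) (\<lambda>i l. P l i) SgM (rees_flip \<circ> fM) f l0 i0"
  let ?Q = "insert 0 (Suc ` SgM)"
  note TL = transduce_embedding_transducer[OF semigroup P SgM(3) rep f i0 l0]
  note TR = transduce_embedding_transducer_opposite[OF semigroup P SgM(3) rep f i0 l0]
  have Q: "finite ?Q" "0 \<in> ?Q" using SgM(1) by auto
  note step = embedding_transducer_step_closed[OF semigroup P SgM(3) rep f i0 l0]
    embedding_transducer_opposite_step_closed[OF semigroup P SgM(3) rep f i0 l0]
  have "word_problem m f Sg h \<in> C"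
  proof (rule word_problem_reduction[OF C WP Sg(1,2) SgM(2) Q(1,1,2,2) step, where Acc = "\<lambda>_ _. True"])
    fix u x assume ux: "u \<noteq> []" "x \<noteq> []" "set u \<subseteq> Sg" "set x \<subseteq> Sg"
    show "word_eval m f u = word_eval m f (rev x) \<longleftrightarrow> True \<and>
        word_eval (rees_mult m P) fM (transduce ?TL 0 u) =
        word_eval (rees_mult m P) fM (rev (transduce ?TR 0 x))"
      using TL[OF ux(1,3)] TR[OF ux(2,4)] by simp
  next
    fix u assume u: "u \<noteq> []" "set u \<subseteq> Sg"
    show "transduce ?TL 0 u \<noteq> [] \<and> set (transduce ?TL 0 u) \<subseteq> SgM \<and>
        transduce ?TR 0 u \<noteq> [] \<and> set (transduce ?TR 0 u) \<subseteq> SgM"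
      using TL[OF u] TR[OF u] by simp
  qed
  then show ?thesis
    unfolding is_U_def using Sg f Y(2) by (intro exI[of _ Sg] exI[of _ f] exI[of _ h]) simp
qed

theorem mainTheorem12:
  fixes C :: "nat list set set"
    and S :: "'a set" and m :: "'a \<Rightarrow> 'a \<Rightarrow> 'a"
    and I :: "'i set" and L :: "'l set" and P :: "'l \<Rightarrow> 'i \<Rightarrow> 'a"
  assumes "closed_inv_gsm C" and "closed_int_regular C"
    and "is_semigroup S m" and "S \<noteq> {}"
    and "I \<noteq> {}" and "L \<noteq> {}"
    and "\<forall>l\<in>L. \<forall>i\<in>I. P l i \<in> S"
    and "finitely_generated (rees_carrier S I L) (rees_mult m P)"
  shows "is_U C (rees_carrier S I L) (rees_mult m P) \<longleftrightarrow> is_U C S m"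
  using is_U_if_is_U_rees[OF assms(1,3,7,5,6)] is_U_rees_if_is_U[OF assms(1,3,7,8)] by blast

end
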